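(* Let $R$ be a finite commutative chain ring with maximal ideal $\langle a\rangle$, $a$ of nilpotency index $t$, residue field $\mathbb F_q$ of characteristic $p$. Let $e_1,\dots,e_r$ be positive integers not divisible by $p$, $I=\langle X_1^{e_1}-1,\dots,X_r^{e_r}-1\rangle$, $A=R[X_1,\dots,X_r]/I$, and let $\tau$ be the ring automorphism of $A$ given by $\tau(f(X_1,\dots,X_r)+I)=f(X_1^{e_1-1},\dots,X_r^{e_r-1})+I$. Let $\mathcal K$ be an ideal of $A$ and $G_0,\dots,G_t\in R[X_1,\dots,X_r]$ polynomials such that $\bigcap_{i=0}^t\mathrm{Ann}_A\langle G_i+I\rangle=0$, $\mathrm{Ann}_A\langle G_i+I\rangle+\mathrm{Ann}_A\langle G_j+I\rangle=A$ for all $0\le i<j\le t$, and $\mathcal K=\langle G_1,aG_2,\dots,a^{t-1}G_t\rangle+I$. Then $$\mathcal K^\perp=\langle\tau(G_0),a\tau(G_t),\dots,a^{t-1}\tau(G_2)\rangle+I,$$ and the polynomials $\tau(G_0),\dots,\tau(G_t)$ also satisfy $\bigcap_{i}\mathrm{Ann}_A\langle\tau(G_i)+I\rangle=0$ and pairwise comaximality of the annihilators $\mathrm{Ann}_A\langle \tau(G_i)+I\rangle$.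
   Context: $\tau(G_i)$ denotes $G_i(X_1^{e_1-1},\dots,X_r^{e_r-1})$. $A$ is a free $R$-module with basis the monomials $X_1^{i_1}\cdots X_r^{i_r}$, $0\le i_k<e_k$; elements are identified with coefficient vectors in $R^n$, $n=e_1\cdots e_r$. For $\mathbf x,\mathbf y\in R^n$, $\mathbf x\cdot\mathbf y=\sum_k x_ky_k$, and for a code $\mathcal K$, $\mathcal K^\perp=\{\mathbf x:\mathbf x\cdot\mathbf c=0\ \forall\mathbf c\in\mathcal K\}$. *)

theory Defs
  imports "HOL-Computational_Algebra.Primes"
begin

definition R_ideal :: "'a::comm_ring_1 set \<Rightarrow> bool" where
  "R_ideal S \<longleftrightarrow> 0 \<in> S \<and> (\<forall>x\<in>S. \<forall>y\<in>S. x + y \<in> S) \<and> (\<forall>x. \<forall>y\<in>S. x * y \<in> S)"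

definition R_principal :: "'a::comm_ring_1 \<Rightarrow> 'a set" where
  "R_principal a = range (\<lambda>x. a * x)"

definition R_maximal_ideal :: "'a::comm_ring_1 set \<Rightarrow> bool" where
  "R_maximal_ideal P \<longleftrightarrow> R_ideal P \<and> P \<noteq> UNIV \<and>
     (\<forall>J. R_ideal J \<and> P \<subseteq> J \<longrightarrow> J = P \<or> J = UNIV)"

definition chain_ring :: "'a::comm_ring_1 itself \<Rightarrow> bool" where
  "chain_ring _ \<longleftrightarrow> (\<forall>I J :: 'a set. R_ideal I \<and> R_ideal J \<longrightarrow> I \<subseteq> J \<or> J \<subseteq> I)"

(* ---------- the ring A = R[X_0,...,X_{r-1}]/<X_k^{e_k}-1> ----------
   Variables are indexed 0..r-1.  An element of A is represented by its
   coefficient vector w.r.t. the monomial basis X^i, i \<in> box e r. *)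

definition box :: "(nat \<Rightarrow> nat) \<Rightarrow> nat \<Rightarrow> (nat \<Rightarrow> nat) set" where
  "box e r = {i. (\<forall>k<r. i k < e k) \<and> (\<forall>k\<ge>r. i k = 0)}"

definition Acar :: "(nat \<Rightarrow> nat) \<Rightarrow> nat \<Rightarrow> ((nat \<Rightarrow> nat) \<Rightarrow> 'a::comm_ring_1) set" where
  "Acar e r = {f. \<forall>i. i \<notin> box e r \<longrightarrow> f i = 0}"

definition Aadd :: "((nat \<Rightarrow> nat) \<Rightarrow> 'a::comm_ring_1) \<Rightarrow> ((nat \<Rightarrow> nat) \<Rightarrow> 'a) \<Rightarrow> ((nat \<Rightarrow> nat) \<Rightarrow> 'a)" where
  "Aadd f g = (\<lambda>i. f i + g i)"

definition Azero :: "(nat \<Rightarrow> nat) \<Rightarrow> 'a::comm_ring_1" where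
  "Azero = (\<lambda>i. 0)"

definition Amul :: "(nat \<Rightarrow> nat) \<Rightarrow> nat \<Rightarrow> ((nat \<Rightarrow> nat) \<Rightarrow> 'a::comm_ring_1) \<Rightarrow> ((nat \<Rightarrow> nat) \<Rightarrow> 'a) \<Rightarrow> ((nat \<Rightarrow> nat) \<Rightarrow> 'a)" where
  "Amul e r f g = (\<lambda>i. if i \<in> box e r then
      (\<Sum>j\<in>box e r. \<Sum>l\<in>box e r. if (\<forall>k<r. (j k + l k) mod e k = i k) then f j * g l else 0)
     else 0)"

definition A_ideal :: "(nat \<Rightarrow> nat) \<Rightarrow> nat \<Rightarrow> ((nat \<Rightarrow> nat) \<Rightarrow> 'a::comm_ring_1) set \<Rightarrow> bool" where
  "A_ideal e r K \<longleftrightarrow> K \<subseteq> Acar e r \<and> Azero \<in> K \<and> (\<forall>x\<in>K. \<forall>y\<in>K. Aadd x y \<in> K) \<and>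
      (\<forall>x\<in>Acar e r. \<forall>y\<in>K. Amul e r x y \<in> K)"

definition A_gen :: "(nat \<Rightarrow> nat) \<Rightarrow> nat \<Rightarrow> ((nat \<Rightarrow> nat) \<Rightarrow> 'a::comm_ring_1) set \<Rightarrow> ((nat \<Rightarrow> nat) \<Rightarrow> 'a) set" where
  "A_gen e r S = \<Inter>{K. A_ideal e r K \<and> S \<subseteq> K}"

definition A_ann :: "(nat \<Rightarrow> nat) \<Rightarrow> nat \<Rightarrow> ((nat \<Rightarrow> nat) \<Rightarrow> 'a::comm_ring_1) set \<Rightarrow> ((nat \<Rightarrow> nat) \<Rightarrow> 'a) set" where
  "A_ann e r J = {x \<in> Acar e r. \<forall>y\<in>J. Amul e r x y = Azero}"

definition A_sum :: "((nat \<Rightarrow> nat) \<Rightarrow> 'a::comm_ring_1) set \<Rightarrow> ((nat \<Rightarrow> nat) \<Rightarrow> 'a) set \<Rightarrow> ((nat \<Rightarrow> nat) \<Rightarrow> 'a) set" where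
  "A_sum I J = {Aadd x y | x y. x \<in> I \<and> y \<in> J}"

definition A_dot :: "(nat \<Rightarrow> nat) \<Rightarrow> nat \<Rightarrow> ((nat \<Rightarrow> nat) \<Rightarrow> 'a::comm_ring_1) \<Rightarrow> ((nat \<Rightarrow> nat) \<Rightarrow> 'a) \<Rightarrow> 'a" where
  "A_dot e r x y = (\<Sum>i\<in>box e r. x i * y i)"

definition A_perp :: "(nat \<Rightarrow> nat) \<Rightarrow> nat \<Rightarrow> ((nat \<Rightarrow> nat) \<Rightarrow> 'a::comm_ring_1) set \<Rightarrow> ((nat \<Rightarrow> nat) \<Rightarrow> 'a) set" where
  "A_perp e r K = {x \<in> Acar e r. \<forall>c\<in>K. A_dot e r x c = 0}"

definition is_poly :: "nat \<Rightarrow> ((nat \<Rightarrow> nat) \<Rightarrow> 'a::comm_ring_1) \<Rightarrow> bool" where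
  "is_poly r G \<longleftrightarrow> finite {m. G m \<noteq> 0} \<and> (\<forall>m. G m \<noteq> 0 \<longrightarrow> (\<forall>k\<ge>r. m k = 0))"

definition red :: "(nat \<Rightarrow> nat) \<Rightarrow> nat \<Rightarrow> ((nat \<Rightarrow> nat) \<Rightarrow> 'a::comm_ring_1) \<Rightarrow> ((nat \<Rightarrow> nat) \<Rightarrow> 'a)" where
  "red e r G = (\<lambda>i. if i \<in> box e r then
      (\<Sum>m | G m \<noteq> 0 \<and> (\<forall>k<r. m k mod e k = i k). G m) else 0)"

(* tau(G) = G(X_0^{e_0-1}, ..., X_{r-1}^{e_{r-1}-1}) as a polynomial *)
definition tau_poly :: "(nat \<Rightarrow> nat) \<Rightarrow> ((nat \<Rightarrow> nat) \<Rightarrow> 'a::comm_ring_1) \<Rightarrow> ((nat \<Rightarrow> nat) \<Rightarrow> 'a)" where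
  "tau_poly e G = (\<lambda>m'. \<Sum>m | G m \<noteq> 0 \<and> (\<forall>k. m' k = m k * (e k - 1)). G m)"

definition psmult :: "'a::comm_ring_1 \<Rightarrow> ((nat \<Rightarrow> nat) \<Rightarrow> 'a) \<Rightarrow> ((nat \<Rightarrow> nat) \<Rightarrow> 'a)" where
  "psmult c G = (\<lambda>m. c * G m)"

end

theory Submission
  imports Defs
begin

(* Comaximality of the annihilators makes the residues g_i of the G_i pairwise
   orthogonal, and since the annihilators meet in 0, s = g_0 + ... + g_t is a
   non-zero-divisor, hence a unit of the finite ring A.  With w = s^-1 every x
   splits as x = sum_i x w g_i.  If x annihilates K then a^(i-1) x g_i = 0, which in
   the chain ring R forces x g_i into a^(t+1-i) A; hence
   Ann K = <g_0, a g_t, ..., a^(t-1) g_2>, the other inclusion being orthogonality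
   together with a^t = 0.  Finally x . c is the constant coefficient of tau(x) c,
   so K^perp = tau(Ann K), and the ring automorphism tau carries the generators,
   the intersection of the annihilators and their comaximality over. *)

section \<open>Chain rings\<close>

lemma R_ideal_R_principal: "R_ideal (R_principal y)"
  unfolding R_ideal_def R_principal_def
proof (intro conjI ballI allI)
  show "0 \<in> range ((*) y)"
    by (rule range_eqI[of _ _ 0]) simp
  fix u v assume "u \<in> range ((*) y)" "v \<in> range ((*) y)"
  then obtain u' v' where "u = y * u'" "v = y * v'"
    by auto
  then show "u + v \<in> range ((*) y)"
    by (intro range_eqI[of _ _ "u' + v'"]) (simp add: distrib_left)
next
  fix x v assume "v \<in> range ((*) y)"
  then obtain v' where "v = y * v'"
    by auto
  then show "x * v \<in> range ((*) y)"
    by (intro range_eqI[of _ _ "x * v'"]) (simp add: mult.left_commute)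
qed

lemma unit_if_not_in_maximal_principal:
  fixes a y :: "'a::comm_ring_1"
  assumes chain: "chain_ring TYPE('a)"
    and maxid: "R_maximal_ideal (R_principal a)"
    and y: "y \<notin> R_principal a"
  shows "\<exists>z. y * z = 1"
proof -
  have y_in: "y \<in> R_principal y"
    by (auto simp: R_principal_def image_iff intro: exI[of _ 1])
  then have "R_principal a \<subseteq> R_principal y"
    using chain y R_ideal_R_principal unfolding chain_ring_def by blast
  then have "R_principal y = UNIV"
    using maxid y y_in R_ideal_R_principal unfolding R_maximal_ideal_def by blast
  then show ?thesis
    by (auto simp: R_principal_def dest: sym)
qed

lemma chain_ring_power_times_unit:
  fixes a c :: "'a::comm_ring_1"
  assumes chain: "chain_ring TYPE('a)"
    and maxid: "R_maximal_ideal (R_principal a)"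
    and nil: "a ^ t = 0" and c: "c \<noteq> 0"
  obtains k y z where "c = a ^ k * y" "y * z = 1"
proof -
  define P where "P k \<longleftrightarrow> (\<exists>y. c = a ^ k * y)" for k
  have P_bound: "k \<le> t" if "P k" for k
  proof (rule ccontr)
    assume "\<not> k \<le> t"
    then have "a ^ k = 0"
      using nil by (metis le_add_diff_inverse less_imp_le_nat mult_zero_left not_le power_add)
    then show False
      using that c by (auto simp: P_def)
  qed
  define k where "k = (GREATEST k. P k)"
  have "P 0"
    by (simp add: P_def)
  then have "P k"
    unfolding k_def using P_bound by (rule GreatestI_nat)
  then obtain y where y: "c = a ^ k * y"
    by (auto simp: P_def)
  have "y \<notin> R_principal a"
  proof
    assume "y \<in> R_principal a"
    then obtain z where "y = a * z"
      by (auto simp: R_principal_def)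
    then have "c = a ^ Suc k * z"
      using y by (simp add: mult_ac)
    then have "P (Suc k)"
      by (auto simp: P_def)
    then show False
      using Greatest_le_nat[of P "Suc k" t] P_bound by (simp add: k_def)
  qed
  then show ?thesis
    using unit_if_not_in_maximal_principal[OF chain maxid] y that by blast
qed

lemma chain_ring_power_annihilator:
  fixes a c :: "'a::comm_ring_1"
  assumes chain: "chain_ring TYPE('a)"
    and maxid: "R_maximal_ideal (R_principal a)"
    and nil: "a ^ t = 0" "\<forall>s<t. a ^ s \<noteq> 0"
    and s: "s \<le> t" and c: "a ^ s * c = 0"
  shows "\<exists>d. c = a ^ (t - s) * d"
proof (cases "c = 0")
  case False
  then obtain k y z where y: "c = a ^ k * y" and z: "y * z = 1"
    by (rule chain_ring_power_times_unit[OF chain maxid nil(1)])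
  have "a ^ (s + k) = a ^ s * c * z"
    using y z by (simp add: power_add mult.assoc)
  then have "t \<le> s + k"
    using c nil(2) by (metis mult_zero_left not_le)
  then have "a ^ k = a ^ (t - s) * a ^ (k - (t - s))"
    by (simp flip: power_add)
  then have "c = a ^ (t - s) * (a ^ (k - (t - s)) * y)"
    using y by (simp add: mult.assoc)
  then show ?thesis ..
qed (auto intro: exI[of _ 0])

section \<open>The substitution tau on polynomials\<close>

lemma mult_pred_mod_eq:
  fixes E m :: nat
  assumes "0 < E"
  shows "(m * (E - 1)) mod E = (E - m mod E) mod E"
proof -
  define u where "u = m mod E"
  have "u < E" using assms by (simp add: u_def)
  have "(m * (E - 1)) mod E = (u * (E - 1)) mod E"
    by (simp add: u_def mod_mult_left_eq)
  also have "\<dots> = (E - u) mod E"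
  proof (cases u)
    case (Suc v)
    with \<open>u < E\<close> have "u * (E - 1) = v * E + (E - u)"
      by (simp add: algebra_simps diff_mult_distrib2)
    then show ?thesis by simp
  qed simp
  finally show ?thesis by (simp add: u_def)
qed

lemma mult_pred_mod_eq_iff:
  fixes E m x :: nat
  assumes "0 < E" "x < E"
  shows "(m * (E - 1)) mod E = x \<longleftrightarrow> m mod E = (E - x) mod E"
proof -
  have "(E - u) mod E = x \<longleftrightarrow> u = (E - x) mod E" if "u < E" for u
    using that assms mod_if by auto
  then show ?thesis
    unfolding mult_pred_mod_eq[OF assms(1)] using assms(1) by simp
qed

lemma tau_poly_support:
  "{m'. tau_poly e G m' \<noteq> 0} \<subseteq> (\<lambda>m k. m k * (e k - 1)) ` {m. G m \<noteq> 0}"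
proof
  fix m' assume "m' \<in> {m'. tau_poly e G m' \<noteq> 0}"
  then have "(\<Sum>m | G m \<noteq> 0 \<and> (\<forall>k. m' k = m k * (e k - 1)). G m) \<noteq> 0"
    by (simp add: tau_poly_def)
  then have "{m. G m \<noteq> 0 \<and> (\<forall>k. m' k = m k * (e k - 1))} \<noteq> {}"
    by (metis sum.empty)
  then show "m' \<in> (\<lambda>m k. m k * (e k - 1)) ` {m. G m \<noteq> 0}"
    by (auto simp: image_iff fun_eq_iff)
qed

lemma is_poly_tau_poly:
  assumes "is_poly r G"
  shows "is_poly r (tau_poly e G)"
  unfolding is_poly_def
proof
  show "finite {m'. tau_poly e G m' \<noteq> 0}"
    using assms by (intro finite_subset[OF tau_poly_support] finite_imageI) (simp add: is_poly_def)
  show "\<forall>m'. tau_poly e G m' \<noteq> 0 \<longrightarrow> (\<forall>k\<ge>r. m' k = 0)"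
    using assms tau_poly_support by (fastforce simp: is_poly_def)
qed

section \<open>The group algebra A\<close>

(* Exponent vectors in box e r form the group Z/e_0 x ... x Z/e_(r-1) under
   box_add, and Amul is the convolution product of its group algebra A. *)
definition box_add :: "(nat \<Rightarrow> nat) \<Rightarrow> nat \<Rightarrow> (nat \<Rightarrow> nat) \<Rightarrow> (nat \<Rightarrow> nat) \<Rightarrow> nat \<Rightarrow> nat" where
  "box_add e r i j = (\<lambda>k. if k < r then (i k + j k) mod e k else 0)"

definition box_neg :: "(nat \<Rightarrow> nat) \<Rightarrow> nat \<Rightarrow> (nat \<Rightarrow> nat) \<Rightarrow> nat \<Rightarrow> nat" where
  "box_neg e r i = (\<lambda>k. if k < r then (e k - i k) mod e k else 0)"

definition box_zero :: "nat \<Rightarrow> nat" where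
  "box_zero = (\<lambda>k. 0)"

lemma mult_if_one_zero [simp]: "(x::'a::comm_ring_1) * (if P then 1 else 0) = (if P then x else 0)"
  and if_one_zero_mult [simp]: "(if P then 1 else 0) * (x::'a::comm_ring_1) = (if P then x else 0)"
  by simp_all

definition Amonom :: "(nat \<Rightarrow> nat) \<Rightarrow> (nat \<Rightarrow> nat) \<Rightarrow> 'a::comm_ring_1" where
  "Amonom h = (\<lambda>i. if i = h then 1 else 0)"

abbreviation Aone :: "(nat \<Rightarrow> nat) \<Rightarrow> 'a::comm_ring_1" where
  "Aone \<equiv> Amonom box_zero"

definition Ascale :: "'a::comm_ring_1 \<Rightarrow> ((nat \<Rightarrow> nat) \<Rightarrow> 'a) \<Rightarrow> (nat \<Rightarrow> nat) \<Rightarrow> 'a" where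
  "Ascale c f = (\<lambda>i. c * f i)"

locale cyclic_group_algebra =
  fixes e :: "nat \<Rightarrow> nat" and r :: nat
  assumes e_pos: "\<forall>k<r. 0 < e k"
begin

abbreviation "B \<equiv> box e r"
abbreviation idx_add (infixl "\<oplus>" 65) where "i \<oplus> j \<equiv> box_add e r i j"
abbreviation idx_neg ("\<ominus>") where "\<ominus> i \<equiv> box_neg e r i"

lemma finite_box: "finite B"
proof (rule finite_subset)
  show "B \<subseteq> {f. \<forall>x. (x \<in> {..<r} \<longrightarrow> f x \<in> {..<(\<Sum>k<r. e k)}) \<and> (x \<notin> {..<r} \<longrightarrow> f x = 0)}"
    by (auto simp: box_def intro: less_le_trans[OF _ member_le_sum])
qed (intro finite_set_of_finite_funs; simp)

lemma box_zero_in [simp]: "box_zero \<in> B"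
  and box_add_in [simp]: "i \<oplus> j \<in> B"
  and box_neg_in [simp]: "\<ominus> i \<in> B"
  using e_pos by (auto simp: box_def box_zero_def box_add_def box_neg_def)

lemma box_add_comm: "i \<oplus> j = j \<oplus> i"
  by (auto simp: box_add_def add.commute)

lemma box_add_assoc: "(i \<oplus> j) \<oplus> l = i \<oplus> (j \<oplus> l)"
  by (auto simp: box_add_def mod_simps add.assoc)

lemma box_add_zero [simp]: "i \<in> B \<Longrightarrow> i \<oplus> box_zero = i"
  by (auto simp: box_add_def box_zero_def box_def)

lemma box_add_neg [simp]: "i \<in> B \<Longrightarrow> i \<oplus> \<ominus> i = box_zero"
proof -
  assume "i \<in> B"
  then have "k < r \<Longrightarrow> (i k + (e k - i k)) mod e k = 0" for k
    by (auto simp: box_def less_imp_le)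
  then show ?thesis
    by (auto simp: box_add_def box_neg_def box_zero_def fun_eq_iff mod_add_right_eq)
qed

lemma box_add_cancel_left [simp]: "l \<in> B \<Longrightarrow> m \<in> B \<Longrightarrow> (l \<oplus> m) \<oplus> \<ominus> l = m"
  by (metis box_add_assoc box_add_comm box_add_neg box_add_zero)

lemma box_add_sub_cancel [simp]: "l \<in> B \<Longrightarrow> j \<in> B \<Longrightarrow> l \<oplus> (j \<oplus> \<ominus> l) = j"
  by (metis box_add_assoc box_add_comm box_add_neg box_add_zero)

lemma box_neg_add_cancel [simp]: "l \<in> B \<Longrightarrow> m \<in> B \<Longrightarrow> \<ominus> l \<oplus> (m \<oplus> l) = m"
  by (metis box_add_cancel_left box_add_comm)

lemma box_zero_add [simp]: "i \<in> B \<Longrightarrow> box_zero \<oplus> i = i"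
  by (metis box_add_comm box_add_zero)

lemma box_neg_unique: "i \<in> B \<Longrightarrow> j \<in> B \<Longrightarrow> i \<oplus> j = box_zero \<Longrightarrow> j = \<ominus> i"
  by (metis box_add_cancel_left box_add_comm box_add_neg box_add_zero box_neg_in)

lemma box_neg_neg [simp]: "i \<in> B \<Longrightarrow> \<ominus> (\<ominus> i) = i"
  by (metis box_add_comm box_add_neg box_neg_in box_neg_unique)

lemma box_neg_add: "i \<in> B \<Longrightarrow> j \<in> B \<Longrightarrow> \<ominus> (i \<oplus> j) = \<ominus> i \<oplus> \<ominus> j"
  by (rule box_neg_unique[symmetric]) (simp_all, metis box_add_assoc box_add_comm box_add_neg box_add_zero box_neg_in)

lemma box_neg_zero [simp]: "\<ominus> box_zero = box_zero"
  by (metis box_add_neg box_zero_add box_zero_in box_neg_in)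

lemma box_neg_inj: "i \<in> B \<Longrightarrow> j \<in> B \<Longrightarrow> \<ominus> j = \<ominus> i \<longleftrightarrow> j = i"
  by (metis box_neg_neg)

lemma box_sub_sub [simp]: "i \<in> B \<Longrightarrow> j \<in> B \<Longrightarrow> i \<oplus> \<ominus> (i \<oplus> \<ominus> j) = j"
  by (metis box_add_sub_cancel box_add_comm box_neg_add box_neg_in box_neg_neg box_add_assoc box_add_neg box_add_zero)

lemma box_add_eq_iff:
  assumes "i \<in> B" "j \<in> B" "l \<in> B"
  shows "(\<forall>k<r. (j k + l k) mod e k = i k) \<longleftrightarrow> l = i \<oplus> \<ominus> j"
proof -
  have "(\<forall>k<r. (j k + l k) mod e k = i k) \<longleftrightarrow> j \<oplus> l = i"
    using assms by (auto simp: box_add_def box_def fun_eq_iff)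
  also have "\<dots> \<longleftrightarrow> l = i \<oplus> \<ominus> j"
    using assms by (metis box_add_cancel_left box_add_comm box_add_sub_cancel)
  finally show ?thesis .
qed

abbreviation "C \<equiv> Acar e r"
abbreviation mul (infixl "\<otimes>" 70) where "f \<otimes> g \<equiv> Amul e r f g"

lemma Amul_conv: "i \<in> B \<Longrightarrow> (f \<otimes> g) i = (\<Sum>j\<in>B. f j * g (i \<oplus> \<ominus> j))"
proof -
  assume i: "i \<in> B"
  then have "(f \<otimes> g) i = (\<Sum>j\<in>B. \<Sum>l\<in>B. if l = i \<oplus> \<ominus> j then f j * g l else 0)"
    by (simp add: Amul_def box_add_eq_iff cong: sum.cong)
  then show ?thesis
    by (simp add: sum.delta' finite_box)
qed

lemma Amul_outside: "i \<notin> B \<Longrightarrow> (f \<otimes> g) i = 0"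
  by (simp add: Amul_def)

lemma Amul_in [simp]: "f \<otimes> g \<in> C"
  by (simp add: Acar_def Amul_outside)

lemma Amul_comm: "f \<otimes> g = g \<otimes> f"
proof
  fix i show "(f \<otimes> g) i = (g \<otimes> f) i"
  proof (cases "i \<in> B")
    case True
    then show ?thesis
      unfolding Amul_conv[OF True]
      by (intro sum.reindex_bij_witness[where i="\<lambda>j. i \<oplus> \<ominus> j" and j="\<lambda>j. i \<oplus> \<ominus> j"])
        (auto simp: mult.commute)
  qed (simp add: Amul_outside)
qed

lemma Amul_assoc: "f \<otimes> g \<otimes> h = f \<otimes> (g \<otimes> h)"
proof
  fix i show "(f \<otimes> g \<otimes> h) i = (f \<otimes> (g \<otimes> h)) i"
  proof (cases "i \<in> B")
    case True
    have shift: "(\<Sum>j\<in>B. g (j \<oplus> \<ominus> l) * h (i \<oplus> \<ominus> j)) = (\<Sum>m\<in>B. g m * h (i \<oplus> \<ominus> l \<oplus> \<ominus> m))"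
      if "l \<in> B" for l
      by (rule sum.reindex_bij_witness[where i="\<lambda>m. l \<oplus> m" and j="\<lambda>j. j \<oplus> \<ominus> l"])
        (use True that in \<open>auto simp: box_neg_add box_add_assoc\<close>)
    have "(f \<otimes> g \<otimes> h) i = (\<Sum>j\<in>B. \<Sum>l\<in>B. f l * (g (j \<oplus> \<ominus> l) * h (i \<oplus> \<ominus> j)))"
      using True by (simp add: Amul_conv sum_distrib_right mult.assoc)
    also have "\<dots> = (\<Sum>l\<in>B. f l * (\<Sum>j\<in>B. g (j \<oplus> \<ominus> l) * h (i \<oplus> \<ominus> j)))"
      by (subst sum.swap) (simp add: sum_distrib_left)
    also have "\<dots> = (f \<otimes> (g \<otimes> h)) i"
      using True by (simp add: Amul_conv shift)
    finally show ?thesis .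
  qed (simp add: Amul_outside)
qed

lemma Amul_left_commute: "f \<otimes> (g \<otimes> h) = g \<otimes> (f \<otimes> h)"
  by (metis Amul_assoc Amul_comm)

lemmas Amul_ac = Amul_assoc Amul_comm Amul_left_commute

lemma Amul_Amonom_neg_at_zero: "i \<in> B \<Longrightarrow> (f \<otimes> Amonom (\<ominus> i)) box_zero = f i"
  by (simp add: Amul_conv Amonom_def box_neg_inj finite_box cong: if_cong)

lemma Aone_Amul [simp]: "f \<in> C \<Longrightarrow> Aone \<otimes> f = f"
proof
  fix i assume "f \<in> C"
  then show "(Aone \<otimes> f) i = f i"
    by (cases "i \<in> B") (simp_all add: Amul_conv Amul_outside Amonom_def finite_box Acar_def)
qed

lemma Amul_Aone [simp]: "f \<in> C \<Longrightarrow> f \<otimes> Aone = f"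
  by (simp only: Amul_comm[of f] Aone_Amul)

lemma Acar_eqI:
  assumes "f \<in> C" "g \<in> C" "\<And>i. i \<in> B \<Longrightarrow> f i = g i"
  shows "f = g"
proof
  fix i show "f i = g i"
    using assms by (cases "i \<in> B") (auto simp: Acar_def)
qed

lemma Amul_Aadd_left: "Aadd f g \<otimes> h = Aadd (f \<otimes> h) (g \<otimes> h)"
  by (rule Acar_eqI) (simp_all add: Acar_def Amul_conv Amul_outside Aadd_def distrib_right sum.distrib)

lemma Amul_diff_left: "(\<lambda>i. f i - g i) \<otimes> h = (\<lambda>i. (f \<otimes> h) i - (g \<otimes> h) i)"
  by (rule Acar_eqI) (simp_all add: Acar_def Amul_conv Amul_outside left_diff_distrib sum_subtractf)

lemma Amul_sum_right: "h \<otimes> (\<lambda>x. \<Sum>k\<in>I. F k x) = (\<lambda>x. \<Sum>k\<in>I. (h \<otimes> F k) x)"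
proof (rule Acar_eqI)
  fix i assume "i \<in> B"
  then show "(h \<otimes> (\<lambda>x. \<Sum>k\<in>I. F k x)) i = (\<Sum>k\<in>I. (h \<otimes> F k) i)"
    by (simp add: Amul_conv sum_distrib_left) (rule sum.swap)
qed (auto simp: Acar_def Amul_outside)

lemma Amul_sum_left: "(\<lambda>x. \<Sum>k\<in>I. F k x) \<otimes> h = (\<lambda>x. \<Sum>k\<in>I. (F k \<otimes> h) x)"
  by (simp only: Amul_comm[of _ h] Amul_sum_right)

lemma Amul_Ascale_left: "Ascale c f \<otimes> h = Ascale c (f \<otimes> h)"
  by (rule Acar_eqI) (simp_all add: Acar_def Amul_conv Amul_outside Ascale_def sum_distrib_left mult.assoc)

lemma Amul_Ascale_right: "h \<otimes> Ascale c f = Ascale c (h \<otimes> f)"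
  by (simp only: Amul_comm[of h] Amul_Ascale_left)

lemma Amul_Azero [simp]: "h \<otimes> Azero = Azero"
  by (rule Acar_eqI) (simp_all add: Amul_conv Amul_outside Azero_def Acar_def)

lemma Azero_Amul [simp]: "Azero \<otimes> h = Azero"
  by (simp only: Amul_comm[of Azero] Amul_Azero)

lemma Ascale_Ascale: "Ascale c (Ascale d f) = Ascale (c * d) f"
  by (simp add: Ascale_def mult.assoc)

lemma Ascale_zero [simp]: "Ascale 0 f = Azero"
  and Ascale_Azero [simp]: "Ascale c Azero = Azero"
  by (simp_all add: Ascale_def Azero_def)

lemma Aadd_Azero [simp]: "Aadd f Azero = f"
  by (simp add: Aadd_def Azero_def)

lemma Ascale_in [simp]: "f \<in> C \<Longrightarrow> Ascale c f \<in> C"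
  and Aadd_in [simp]: "f \<in> C \<Longrightarrow> g \<in> C \<Longrightarrow> Aadd f g \<in> C"
  and Azero_in [simp]: "Azero \<in> C"
  and Amonom_in [simp]: "h \<in> B \<Longrightarrow> Amonom h \<in> C"
  by (auto simp: Ascale_def Aadd_def Azero_def Amonom_def Acar_def)

lemma finite_Acar: "finite (C :: ((nat \<Rightarrow> nat) \<Rightarrow> 'a::{comm_ring_1,finite}) set)"
proof -
  have "C = {f :: (nat \<Rightarrow> nat) \<Rightarrow> 'a. \<forall>x. (x \<in> B \<longrightarrow> f x \<in> UNIV) \<and> (x \<notin> B \<longrightarrow> f x = 0)}"
    by (auto simp: Acar_def)
  then show ?thesis
    using finite_set_of_finite_funs[OF finite_box finite_UNIV] by simp
qed

section \<open>The automorphism tau and the dual code\<close>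

(* X_k^(e_k - 1) = X_k^(-1) in A, so tau sends the monomial X^i to X^(-i). *)
definition Atau :: "((nat \<Rightarrow> nat) \<Rightarrow> 'a::comm_ring_1) \<Rightarrow> (nat \<Rightarrow> nat) \<Rightarrow> 'a" where
  "Atau f = (\<lambda>i. if i \<in> B then f (\<ominus> i) else 0)"

lemma Atau_in [simp]: "Atau f \<in> C"
  by (simp add: Atau_def Acar_def)

lemma Atau_Atau [simp]: "f \<in> C \<Longrightarrow> Atau (Atau f) = f"
  by (auto simp: Atau_def fun_eq_iff Acar_def)

lemma Atau_Azero [simp]: "Atau Azero = Azero"
  by (simp add: Atau_def Azero_def fun_eq_iff)

lemma Atau_Aadd: "Atau (Aadd f g) = Aadd (Atau f) (Atau g)"
  by (simp add: Atau_def Aadd_def fun_eq_iff)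

lemma Atau_Ascale: "Atau (Ascale c f) = Ascale c (Atau f)"
  by (simp add: Atau_def Ascale_def fun_eq_iff)

lemma Atau_Amul: "Atau (f \<otimes> g) = Atau f \<otimes> Atau g"
proof (rule Acar_eqI)
  fix i assume i: "i \<in> B"
  have "Atau (f \<otimes> g) i = (\<Sum>j\<in>B. f j * g (\<ominus> i \<oplus> \<ominus> j))"
    using i by (simp add: Atau_def Amul_conv)
  also have "\<dots> = (\<Sum>j\<in>B. f (\<ominus> j) * g (\<ominus> (i \<oplus> \<ominus> j)))"
    by (rule sum.reindex_bij_witness[where i="\<lambda>j. \<ominus> j" and j="\<lambda>j. \<ominus> j"])
      (use i in \<open>simp_all add: box_neg_add\<close>)
  also have "\<dots> = (Atau f \<otimes> Atau g) i"
    using i by (simp add: Atau_def Amul_conv)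
  finally show "Atau (f \<otimes> g) i = (Atau f \<otimes> Atau g) i" .
qed simp_all

lemma Atau_eq_Azero_iff: "f \<in> C \<Longrightarrow> Atau f = Azero \<longleftrightarrow> f = Azero"
  by (metis Atau_Atau Atau_Azero)

lemma inj_on_Atau: "inj_on Atau C"
  by (rule inj_onI) (metis Atau_Atau)

lemma Atau_image_eq:
  assumes "S \<subseteq> C"
  shows "Atau ` S = {x \<in> C. Atau x \<in> S}"
proof
  show "Atau ` S \<subseteq> {x \<in> C. Atau x \<in> S}"
    using assms by auto
  show "{x \<in> C. Atau x \<in> S} \<subseteq> Atau ` S"
  proof
    fix x assume "x \<in> {x \<in> C. Atau x \<in> S}"
    then show "x \<in> Atau ` S"
      by (intro image_eqI[where x = "Atau x"]) simp_all
  qed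
qed

lemma Atau_image_Atau_image: "S \<subseteq> C \<Longrightarrow> Atau ` Atau ` S = S"
  by (simp add: image_image subset_eq cong: image_cong)

lemma Atau_image_Acar: "Atau ` C = C"
  by (simp add: Atau_image_eq)

lemma Atau_image_A_sum: "Atau ` A_sum I J = A_sum (Atau ` I) (Atau ` J)"
proof -
  have "Atau ` A_sum I J = {Atau (Aadd x y) | x y. x \<in> I \<and> y \<in> J}"
    unfolding A_sum_def by blast
  also have "\<dots> = A_sum (Atau ` I) (Atau ` J)"
    unfolding A_sum_def Atau_Aadd by blast
  finally show ?thesis .
qed

lemma A_dot_eq_Amul_Atau: "A_dot e r x c = (Atau x \<otimes> c) box_zero"
proof -
  have "(Atau x \<otimes> c) box_zero = (\<Sum>j\<in>B. x (\<ominus> j) * c (\<ominus> j))"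
    by (simp add: Amul_conv Atau_def)
  also have "\<dots> = (\<Sum>j\<in>B. x j * c j)"
    by (rule sum.reindex_bij_witness[where i="\<lambda>j. \<ominus> j" and j="\<lambda>j. \<ominus> j"]) simp_all
  finally show ?thesis
    by (simp add: A_dot_def)
qed

abbreviation "Ann \<equiv> A_ann e r"
abbreviation "Gen \<equiv> A_gen e r"

lemma A_ideal_Acar: "A_ideal e r C"
  by (simp add: A_ideal_def)

lemma A_ideal_A_ann: "A_ideal e r (Ann S)"
  by (auto simp: A_ideal_def A_ann_def Amul_Aadd_left Amul_assoc)

lemma A_ideal_A_gen: "S \<subseteq> C \<Longrightarrow> A_ideal e r (Gen S)"
  using A_ideal_Acar unfolding A_gen_def A_ideal_def by (auto; blast)

lemma A_gen_superset: "S \<subseteq> Gen S"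
  by (auto simp: A_gen_def)

lemma A_gen_least: "A_ideal e r J \<Longrightarrow> S \<subseteq> J \<Longrightarrow> Gen S \<subseteq> J"
  by (auto simp: A_gen_def)

lemma A_ideal_Amul: "A_ideal e r J \<Longrightarrow> x \<in> C \<Longrightarrow> y \<in> J \<Longrightarrow> x \<otimes> y \<in> J"
  by (simp add: A_ideal_def)

lemma A_ideal_Azero: "A_ideal e r J \<Longrightarrow> Azero \<in> J"
  by (simp add: A_ideal_def)

lemma A_ideal_sum:
  assumes "A_ideal e r J" "finite I" "\<forall>k\<in>I. F k \<in> J"
  shows "(\<lambda>x. \<Sum>k\<in>I. F k x) \<in> J"
  using assms(2,3)
proof (induction I rule: finite_induct)
  case empty
  then show ?case using A_ideal_Azero[OF assms(1)] by (simp add: Azero_def)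
next
  case (insert k I)
  then have "(\<lambda>x. \<Sum>k\<in>insert k I. F k x) = Aadd (F k) (\<lambda>x. \<Sum>k\<in>I. F k x)"
    by (simp add: Aadd_def)
  then show ?case
    using insert assms(1) by (simp add: A_ideal_def)
qed

lemma A_ann_A_gen:
  assumes "S \<subseteq> C"
  shows "Ann (Gen S) = Ann S"
proof
  show "Ann (Gen S) \<subseteq> Ann S"
    using A_gen_superset[of S] by (auto simp: A_ann_def)
  show "Ann S \<subseteq> Ann (Gen S)"
  proof
    fix x assume x: "x \<in> Ann S"
    have "Gen S \<subseteq> Ann {x}"
      using x assms by (intro A_gen_least A_ideal_A_ann) (auto simp: A_ann_def Amul_comm)
    then show "x \<in> Ann (Gen S)"
      using x by (auto simp: A_ann_def Amul_comm)
  qed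
qed

lemma A_ann_A_gen_single: "g \<in> C \<Longrightarrow> Ann (Gen {g}) = {x \<in> C. x \<otimes> g = Azero}"
  using A_ann_A_gen[of "{g}"] by (simp add: A_ann_def)

lemma A_ann_A_gen_single_Atau:
  assumes "g \<in> C"
  shows "Ann (Gen {Atau g}) = Atau ` Ann (Gen {g})"
proof -
  have "x \<otimes> Atau g = Azero \<longleftrightarrow> Atau x \<otimes> g = Azero" if "x \<in> C" for x
    using that Atau_Amul[of "Atau x" g] by (metis Amul_in Atau_Atau Atau_eq_Azero_iff)
  then show ?thesis
    using assms by (auto simp: A_ann_A_gen_single Atau_image_eq)
qed

lemma A_ideal_Atau_image:
  fixes J :: "((nat \<Rightarrow> nat) \<Rightarrow> 'a::comm_ring_1) set"
  assumes J: "A_ideal e r J"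
  shows "A_ideal e r (Atau ` J)"
  unfolding A_ideal_def
proof (intro conjI ballI)
  show "Atau ` J \<subseteq> C" by auto
  show "Azero \<in> Atau ` J"
    using A_ideal_Azero[OF J] Atau_Azero by (metis image_eqI)
  fix x y assume "x \<in> Atau ` J" "y \<in> Atau ` J"
  then show "Aadd x y \<in> Atau ` J"
    using J by (auto simp: A_ideal_def Atau_Aadd[symmetric])
next
  fix x y :: "(nat \<Rightarrow> nat) \<Rightarrow> 'a"
  assume x: "x \<in> C" and y: "y \<in> Atau ` J"
  then obtain z where z: "z \<in> J" "y = Atau z" by auto
  then have "x \<otimes> y = Atau (Atau x \<otimes> z)"
    using x by (simp add: Atau_Amul)
  then show "x \<otimes> y \<in> Atau ` J"
    using J z by (simp add: A_ideal_Amul)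
qed

lemma A_gen_Atau_image:
  assumes S: "S \<subseteq> C"
  shows "Gen (Atau ` S) = Atau ` Gen S"
proof
  show "Gen (Atau ` S) \<subseteq> Atau ` Gen S"
    using A_gen_superset[of S] by (intro A_gen_least A_ideal_Atau_image A_ideal_A_gen S) auto
  have "Gen S \<subseteq> Atau ` Gen (Atau ` S)"
  proof (rule A_gen_least)
    show "A_ideal e r (Atau ` Gen (Atau ` S))"
      by (intro A_ideal_Atau_image A_ideal_A_gen) auto
    show "S \<subseteq> Atau ` Gen (Atau ` S)"
      using Atau_image_Atau_image[OF S] A_gen_superset[of "Atau ` S"] by blast
  qed
  then have "Atau ` Gen S \<subseteq> Atau ` Atau ` Gen (Atau ` S)"
    by blast
  also have "\<dots> = Gen (Atau ` S)"
    using A_ideal_A_gen[of "Atau ` S"] by (intro Atau_image_Atau_image) (auto simp: A_ideal_def image_subset_iff)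
  finally show "Atau ` Gen S \<subseteq> Gen (Atau ` S)" .
qed

lemma A_perp_eq_Atau_image_A_ann:
  assumes K: "A_ideal e r K"
  shows "A_perp e r K = Atau ` Ann K"
proof -
  have "x \<in> A_perp e r K \<longleftrightarrow> Atau x \<in> Ann K" if x: "x \<in> C" for x
  proof
    assume x_perp: "x \<in> A_perp e r K"
    have "Atau x \<otimes> c = Azero" if c: "c \<in> K" for c
    proof (rule Acar_eqI)
      fix i assume i: "i \<in> B"
      have "(Atau x \<otimes> c) i = (Atau x \<otimes> c \<otimes> Amonom (\<ominus> i)) box_zero"
        using i by (simp add: Amul_Amonom_neg_at_zero)
      also have "\<dots> = A_dot e r x (Amonom (\<ominus> i) \<otimes> c)"
        by (simp add: A_dot_eq_Amul_Atau Amul_assoc Amul_comm[of c])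
      also have "\<dots> = 0"
        using x_perp A_ideal_Amul[OF K _ c] by (simp add: A_perp_def)
      finally show "(Atau x \<otimes> c) i = Azero i"
        by (simp add: Azero_def)
    qed simp_all
    then show "Atau x \<in> Ann K"
      by (simp add: A_ann_def)
  next
    assume "Atau x \<in> Ann K"
    then show "x \<in> A_perp e r K"
      using x by (simp add: A_perp_def A_ann_def A_dot_eq_Amul_Atau Azero_def)
  qed
  then show ?thesis
    by (auto simp: Atau_image_eq A_ann_def A_perp_def)
qed

lemma red_in [simp]: "red e r G \<in> C"
  by (simp add: red_def Acar_def)

lemma red_psmult:
  assumes "is_poly r H"
  shows "red e r (psmult c H) = Ascale c (red e r H)"
proof (rule Acar_eqI)
  have fin: "finite {m. H m \<noteq> 0}"
    using assms by (simp add: is_poly_def)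
  fix i assume "i \<in> B"
  define P where "P m \<longleftrightarrow> (\<forall>k<r. m k mod e k = i k)" for m :: "nat \<Rightarrow> nat"
  have "red e r (psmult c H) i = (\<Sum>m | c * H m \<noteq> 0 \<and> P m. c * H m)"
    using \<open>i \<in> B\<close> by (simp add: red_def psmult_def P_def)
  also have "\<dots> = (\<Sum>m | H m \<noteq> 0 \<and> P m. c * H m)"
    by (rule sum.mono_neutral_left) (auto intro: finite_subset[OF _ fin])
  also have "\<dots> = Ascale c (red e r H) i"
    using \<open>i \<in> B\<close> by (simp add: red_def Ascale_def P_def sum_distrib_left)
  finally show "red e r (psmult c H) i = Ascale c (red e r H) i" .
qed (simp_all add: Acar_def red_def Ascale_def)

lemma red_tau_poly_eq_sum:
  assumes fin: "finite {m. G m \<noteq> 0}" and i: "i \<in> B"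
  shows "red e r (tau_poly e G) i = (\<Sum>m | G m \<noteq> 0 \<and> (\<forall>k<r. (m k * (e k - 1)) mod e k = i k). G m)"
proof -
  define S where "S = {m. G m \<noteq> 0}"
  define \<phi> where "\<phi> m = (\<lambda>k. m k * (e k - 1))" for m :: "nat \<Rightarrow> nat"
  define P where "P m' \<longleftrightarrow> (\<forall>k<r. m' k mod e k = i k)" for m' :: "nat \<Rightarrow> nat"
  have fibre: "tau_poly e G m' = (\<Sum>m | m \<in> S \<and> \<phi> m = m'. G m)" for m'
    unfolding tau_poly_def S_def \<phi>_def by (rule sum.cong) (auto simp: fun_eq_iff)
  have "red e r (tau_poly e G) i = (\<Sum>m' | tau_poly e G m' \<noteq> 0 \<and> P m'. tau_poly e G m')"
    using i by (simp add: red_def P_def)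
  also have "\<dots> = (\<Sum>m'\<in>\<phi> ` S \<inter> Collect P. tau_poly e G m')"
  proof (rule sum.mono_neutral_left)
    show "{m'. tau_poly e G m' \<noteq> 0 \<and> P m'} \<subseteq> \<phi> ` S \<inter> Collect P"
    proof
      fix m' assume m': "m' \<in> {m'. tau_poly e G m' \<noteq> 0 \<and> P m'}"
      then have "{m. m \<in> S \<and> \<phi> m = m'} \<noteq> {}"
        using fibre[of m'] by force
      then show "m' \<in> \<phi> ` S \<inter> Collect P"
        using m' by auto
    qed
  qed (use fin in \<open>auto simp: S_def\<close>)
  also have "\<dots> = (\<Sum>m'\<in>\<phi> ` S \<inter> Collect P. \<Sum>m | m \<in> {m \<in> S. P (\<phi> m)} \<and> \<phi> m = m'. G m)"
    by (rule sum.cong[OF refl]) (auto simp: fibre intro!: sum.cong)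
  also have "\<dots> = (\<Sum>m | m \<in> S \<and> P (\<phi> m). G m)"
    by (rule sum.group) (use fin in \<open>auto simp: S_def\<close>)
  finally show ?thesis
    by (simp add: S_def P_def \<phi>_def)
qed

lemma red_tau_poly:
  assumes G: "is_poly r G"
  shows "red e r (tau_poly e G) = Atau (red e r G)"
proof (rule Acar_eqI)
  fix i assume i: "i \<in> B"
  have cond: "(m k * (e k - 1)) mod e k = i k \<longleftrightarrow> m k mod e k = (\<ominus> i) k" if "k < r" for m k
    using mult_pred_mod_eq_iff[of "e k" "i k" "m k"] e_pos i that by (simp add: box_neg_def box_def)
  have "red e r (tau_poly e G) i = (\<Sum>m | G m \<noteq> 0 \<and> (\<forall>k<r. (m k * (e k - 1)) mod e k = i k). G m)"
    using G i by (intro red_tau_poly_eq_sum) (simp_all add: is_poly_def)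
  also have "\<dots> = (\<Sum>m | G m \<noteq> 0 \<and> (\<forall>k<r. m k mod e k = (\<ominus> i) k). G m)"
    by (rule sum.cong) (use cond in auto)
  also have "\<dots> = Atau (red e r G) i"
    using i by (simp add: Atau_def red_def)
  finally show "red e r (tau_poly e G) i = Atau (red e r G) i" .
qed simp_all

lemma red_scaled_generators:
  fixes a :: "'a::comm_ring_1" and t :: nat
  assumes polys: "\<forall>i\<le>t. is_poly r (G i)"
  shows "{red e r (psmult (a ^ (j - 1)) (G j)) | j. 1 \<le> j \<and> j \<le> t}
      = {Ascale (a ^ (j - 1)) (red e r (G j)) | j. 1 \<le> j \<and> j \<le> t}"
    and "{red e r (tau_poly e (G 0))} \<union>
        {red e r (psmult (a ^ j) (tau_poly e (G (t + 1 - j)))) | j. 1 \<le> j \<and> j \<le> t - 1}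
      = Atau ` ({red e r (G 0)} \<union> {Ascale (a ^ i) (red e r (G (t + 1 - i))) | i. 1 \<le> i \<and> i \<le> t - 1})"
proof -
  have red_G: "red e r (psmult c (G j)) = Ascale c (red e r (G j))"
    and red_tau_G: "red e r (psmult c (tau_poly e (G j))) = Atau (Ascale c (red e r (G j)))"
    if "j \<le> t" for c j
    using polys that by (simp_all add: red_psmult is_poly_tau_poly red_tau_poly Atau_Ascale)
  show "{red e r (psmult (a ^ (j - 1)) (G j)) | j. 1 \<le> j \<and> j \<le> t}
      = {Ascale (a ^ (j - 1)) (red e r (G j)) | j. 1 \<le> j \<and> j \<le> t}"
    unfolding setcompr_eq_image by (rule image_cong) (simp_all add: red_G)
  have "{red e r (psmult (a ^ j) (tau_poly e (G (t + 1 - j)))) | j. 1 \<le> j \<and> j \<le> t - 1}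
      = Atau ` {Ascale (a ^ i) (red e r (G (t + 1 - i))) | i. 1 \<le> i \<and> i \<le> t - 1}"
    unfolding setcompr_eq_image image_image by (rule image_cong) (auto intro: red_tau_G)
  then show "{red e r (tau_poly e (G 0))} \<union>
        {red e r (psmult (a ^ j) (tau_poly e (G (t + 1 - j)))) | j. 1 \<le> j \<and> j \<le> t - 1}
      = Atau ` ({red e r (G 0)} \<union> {Ascale (a ^ i) (red e r (G (t + 1 - i))) | i. 1 \<le> i \<and> i \<le> t - 1})"
    using polys by (simp add: red_tau_poly)
qed

section \<open>Orthogonal families and the annihilator of K\<close>

lemma orthogonal_if_comaximal_annihilators:
  assumes x: "x \<in> C" and y: "y \<in> C"
    and comax: "A_sum (Ann (Gen {x})) (Ann (Gen {y})) = C"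
  shows "x \<otimes> y = Azero"
proof -
  have "Aone \<in> A_sum (Ann (Gen {x})) (Ann (Gen {y}))"
    using comax by simp
  then obtain u v where uv: "Aone = Aadd u v" "u \<in> C" "u \<otimes> x = Azero" "v \<in> C" "v \<otimes> y = Azero"
    using x y by (auto simp: A_sum_def A_ann_A_gen_single)
  have "x \<otimes> y = Aone \<otimes> (x \<otimes> y)"
    by simp
  also have "\<dots> = Aadd (u \<otimes> x \<otimes> y) (x \<otimes> (v \<otimes> y))"
    by (simp add: uv(1) Amul_Aadd_left Amul_assoc Amul_left_commute[of v x])
  finally show ?thesis
    using uv by simp
qed

lemma pairwise_orthogonal_if_comaximal:
  fixes t :: nat
  assumes gC: "\<forall>i\<le>t. g i \<in> C"
    and ann_comax: "\<forall>i j. i < j \<and> j \<le> t \<longrightarrow> A_sum (Ann (Gen {g i})) (Ann (Gen {g j})) = C"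
  shows "\<forall>i\<le>t. \<forall>j\<le>t. i \<noteq> j \<longrightarrow> g i \<otimes> g j = Azero"
proof (intro allI impI)
  fix i j assume ij: "i \<le> t" "j \<le> t" "i \<noteq> j"
  have vanish: "g k \<otimes> g l = Azero" if "k < l" "l \<le> t" for k l
    using that gC ann_comax by (intro orthogonal_if_comaximal_annihilators) auto
  show "g i \<otimes> g j = Azero"
  proof (cases "i < j")
    case False
    then have "g j \<otimes> g i = Azero"
      using ij vanish by simp
    then show ?thesis
      by (simp only: Amul_comm[of "g i" "g j"])
  qed (use ij vanish in simp)
qed

lemma orthogonal_sum_Amul:
  fixes t :: nat
  assumes orth: "\<forall>i\<le>t. \<forall>j\<le>t. i \<noteq> j \<longrightarrow> g i \<otimes> g j = Azero" and j: "j \<le> t"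
  shows "(\<lambda>y. \<Sum>i\<in>{0..t}. g i y) \<otimes> g j = g j \<otimes> g j"
proof -
  have "(\<lambda>y. \<Sum>i\<in>{0..t}. g i y) \<otimes> g j = (\<lambda>y. \<Sum>i\<in>{0..t}. if i = j then (g j \<otimes> g j) y else 0)"
    unfolding Amul_sum_left using orth j by (intro ext sum.cong) (auto simp: Azero_def)
  also have "\<dots> = g j \<otimes> g j"
    using j by (simp add: fun_eq_iff)
  finally show ?thesis .
qed

lemma orthogonal_sum_cancellable:
  fixes t :: nat
  assumes gC: "\<forall>i\<le>t. g i \<in> C"
    and orth: "\<forall>i\<le>t. \<forall>j\<le>t. i \<noteq> j \<longrightarrow> g i \<otimes> g j = Azero"
    and ann_int: "(\<Inter>i\<in>{0..t}. Ann (Gen {g i})) = {Azero}"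
    and d: "d \<in> C" "d \<otimes> (\<lambda>y. \<Sum>i\<in>{0..t}. g i y) = Azero"
  shows "d = Azero"
proof -
  have int: "y = Azero" if "y \<in> C" "\<forall>i\<le>t. y \<otimes> g i = Azero" for y
    using that gC ann_int by (auto simp: A_ann_A_gen_single)
  have "d \<otimes> g i \<otimes> g j = Azero" if "i \<le> t" "j \<le> t" for i j
  proof (cases "i = j")
    case True
    then have "d \<otimes> g i \<otimes> g j = d \<otimes> (\<lambda>y. \<Sum>i\<in>{0..t}. g i y) \<otimes> g i"
      using orthogonal_sum_Amul[OF orth that(1)] by (simp add: Amul_assoc)
    then show ?thesis
      using d by simp
  next
    case False
    then show ?thesis
      using orth that by (simp add: Amul_assoc)
  qed
  then have "d \<otimes> g i = Azero" if "i \<le> t" for i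
    using that by (intro int) simp_all
  then show ?thesis
    using d by (intro int) simp_all
qed

lemma exists_inverse_if_cancellable:
  fixes s :: "(nat \<Rightarrow> nat) \<Rightarrow> 'a::{comm_ring_1,finite}"
  assumes cancel: "\<And>d. d \<in> C \<Longrightarrow> d \<otimes> s = Azero \<Longrightarrow> d = Azero"
  obtains w where "w \<in> C" "w \<otimes> s = Aone"
proof -
  have "inj_on (\<lambda>y. y \<otimes> s) C"
  proof (rule inj_onI)
    fix y1 y2 assume y: "y1 \<in> C" "y2 \<in> C" "y1 \<otimes> s = y2 \<otimes> s"
    have "(\<lambda>i. y1 i - y2 i) = Azero"
    proof (rule cancel)
      show "(\<lambda>i. y1 i - y2 i) \<in> C"
        using y by (auto simp: Acar_def)
      show "(\<lambda>i. y1 i - y2 i) \<otimes> s = Azero"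
        using y by (simp add: Amul_diff_left Azero_def)
    qed
    then show "y1 = y2"
      by (auto simp: fun_eq_iff Azero_def)
  qed
  then have "(\<lambda>y. y \<otimes> s) ` C = C"
    by (intro endo_inj_surj finite_Acar) auto
  then show ?thesis
    using that Amonom_in[OF box_zero_in] by (metis imageE)
qed

(* w g_i is idempotent: w s = 1 and g_i s = g_i^2. *)
lemma orthogonal_component_idem:
  fixes t :: nat
  assumes orth: "\<forall>i\<le>t. \<forall>j\<le>t. i \<noteq> j \<longrightarrow> g i \<otimes> g j = Azero"
    and w: "w \<otimes> (\<lambda>y. \<Sum>i\<in>{0..t}. g i y) = Aone" and i: "i \<le> t"
  shows "x \<otimes> w \<otimes> g i = w \<otimes> w \<otimes> (x \<otimes> g i) \<otimes> g i"
proof -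
  have "x \<otimes> w \<otimes> g i = x \<otimes> w \<otimes> g i \<otimes> (w \<otimes> (\<lambda>y. \<Sum>i\<in>{0..t}. g i y))"
    by (simp add: w)
  also have "\<dots> = x \<otimes> w \<otimes> w \<otimes> (g i \<otimes> (\<lambda>y. \<Sum>i\<in>{0..t}. g i y))"
    by (simp only: Amul_ac)
  also have "\<dots> = x \<otimes> w \<otimes> w \<otimes> (g i \<otimes> g i)"
    by (subst (2) Amul_comm) (simp only: orthogonal_sum_Amul[OF orth i])
  also have "\<dots> = w \<otimes> w \<otimes> (x \<otimes> g i) \<otimes> g i"
    by (simp only: Amul_ac)
  finally show ?thesis .
qed

lemma orthogonal_decomposition:
  assumes w: "w \<otimes> (\<lambda>y. \<Sum>i\<in>I. g i y) = Aone" and x: "x \<in> C"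
  shows "x = (\<lambda>y. \<Sum>i\<in>I. (x \<otimes> w \<otimes> g i) y)"
proof -
  have "x = x \<otimes> (w \<otimes> (\<lambda>y. \<Sum>i\<in>I. g i y))"
    using x w by simp
  also have "\<dots> = x \<otimes> w \<otimes> (\<lambda>y. \<Sum>i\<in>I. g i y)"
    by (rule Amul_assoc[symmetric])
  finally show ?thesis
    by (simp only: Amul_sum_right)
qed

lemma Ascale_power_annihilator:
  fixes a :: "'a::comm_ring_1"
  assumes chain: "chain_ring TYPE('a)"
    and maxid: "R_maximal_ideal (R_principal a)"
    and nil: "a ^ t = 0" "\<forall>s<t. a ^ s \<noteq> 0"
    and y: "y \<in> C" "Ascale (a ^ s) y = Azero" and s: "s \<le> t"
  obtains z where "z \<in> C" "y = Ascale (a ^ (t - s)) z"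
proof -
  have "\<exists>d. y i = a ^ (t - s) * d" for i
    using y(2) chain_ring_power_annihilator[OF chain maxid nil s, of "y i"]
    by (simp add: Ascale_def Azero_def fun_eq_iff)
  then obtain D where D: "\<And>i. y i = a ^ (t - s) * D i"
    by metis
  define z where "z i = (if i \<in> B then D i else 0)" for i
  have "z \<in> C"
    by (simp add: z_def Acar_def)
  moreover have "y = Ascale (a ^ (t - s)) z"
    using y(1) D by (auto simp: fun_eq_iff Ascale_def z_def Acar_def)
  ultimately show ?thesis
    using that by blast
qed

lemma Ascale_Amul_Ascale: "Ascale c f \<otimes> Ascale d g = Ascale (c * d) (f \<otimes> g)"
  by (simp add: Amul_Ascale_left Amul_Ascale_right Ascale_Ascale mult.commute)

lemma dual_generators_annihilate:
  fixes a :: "'a::comm_ring_1" and t :: nat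
  assumes nil: "a ^ t = 0"
    and gC: "\<forall>i\<le>t. g i \<in> C"
    and orth: "\<forall>i\<le>t. \<forall>j\<le>t. i \<noteq> j \<longrightarrow> g i \<otimes> g j = Azero"
  shows "Gen ({g 0} \<union> {Ascale (a ^ i) (g (t + 1 - i)) | i. 1 \<le> i \<and> i \<le> t - 1})
    \<subseteq> Ann (Gen {Ascale (a ^ (j - 1)) (g j) | j. 1 \<le> j \<and> j \<le> t})"
proof (rule A_gen_least[OF A_ideal_A_ann], rule subsetI)
  have vanish: "Ascale (a ^ i) (g k) \<otimes> Ascale (a ^ (j - 1)) (g j) = Azero"
    if "k \<le> t" "1 \<le> j" "j \<le> t" "k = j \<longrightarrow> i + (j - 1) = t" for i j k
  proof (cases "k = j")
    case True
    then have "a ^ i * a ^ (j - 1) = 0"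
      using that nil by (simp flip: power_add)
    then show ?thesis
      by (simp add: Ascale_Amul_Ascale)
  next
    case False
    then show ?thesis
      using that orth by (simp add: Ascale_Amul_Ascale)
  qed
  fix u assume "u \<in> {g 0} \<union> {Ascale (a ^ i) (g (t + 1 - i)) | i. 1 \<le> i \<and> i \<le> t - 1}"
  then obtain i k where u: "u = Ascale (a ^ i) (g k)" "k \<le> t" "1 \<le> k \<longrightarrow> i + (k - 1) = t"
  proof (elim UnE)
    assume "u \<in> {g 0}"
    then show thesis
      using that[of 0 0] by (simp add: Ascale_def)
  next
    assume "u \<in> {Ascale (a ^ i) (g (t + 1 - i)) | i. 1 \<le> i \<and> i \<le> t - 1}"
    then show thesis
      using that by auto
  qed
  then show "u \<in> Ann (Gen {Ascale (a ^ (j - 1)) (g j) | j. 1 \<le> j \<and> j \<le> t})"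
    using gC vanish by (subst A_ann_A_gen) (auto simp: A_ann_def)
qed

lemma orthogonal_component_scaled:
  fixes a :: "'a::comm_ring_1" and t :: nat
  assumes chain: "chain_ring TYPE('a)"
    and maxid: "R_maximal_ideal (R_principal a)"
    and nil: "a ^ t = 0" "\<forall>s<t. a ^ s \<noteq> 0"
    and orth: "\<forall>i\<le>t. \<forall>j\<le>t. i \<noteq> j \<longrightarrow> g i \<otimes> g j = Azero"
    and w: "w \<otimes> (\<lambda>y. \<Sum>i\<in>{0..t}. g i y) = Aone"
    and i: "1 \<le> i" "i \<le> t" and x: "Ascale (a ^ (i - 1)) (x \<otimes> g i) = Azero"
  obtains z where "z \<in> C" "x \<otimes> w \<otimes> g i = z \<otimes> Ascale (a ^ (t + 1 - i)) (g i)"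
proof -
  have "i - 1 \<le> t"
    using i by simp
  with x obtain z where "z \<in> C" "x \<otimes> g i = Ascale (a ^ (t - (i - 1))) z"
    by (rule Ascale_power_annihilator[OF chain maxid nil Amul_in])
  moreover have "t - (i - 1) = t + 1 - i"
    using i by simp
  ultimately have z: "x \<otimes> g i = Ascale (a ^ (t + 1 - i)) z"
    by simp
  have "x \<otimes> w \<otimes> g i = w \<otimes> w \<otimes> Ascale (a ^ (t + 1 - i)) z \<otimes> g i"
    using orthogonal_component_idem[OF orth w i(2)] by (simp only: z)
  also have "\<dots> = w \<otimes> w \<otimes> z \<otimes> Ascale (a ^ (t + 1 - i)) (g i)"
    by (simp only: Amul_Ascale_left Amul_Ascale_right)
  finally show ?thesis
    by (intro that[of "w \<otimes> w \<otimes> z"]) simp_all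
qed

lemma scaled_generator_in_dual:
  fixes a :: "'a::comm_ring_1" and t :: nat
  assumes nil: "a ^ t = 0" and gC: "\<forall>i\<le>t. g i \<in> C" and i: "1 \<le> i" "i \<le> t"
  shows "Ascale (a ^ (t + 1 - i)) (g i)
    \<in> Gen ({g 0} \<union> {Ascale (a ^ j) (g (t + 1 - j)) | j. 1 \<le> j \<and> j \<le> t - 1})"
    (is "_ \<in> Gen ?L")
proof (cases "i = 1")
  case True
  have "A_ideal e r (Gen ?L)"
    using gC by (intro A_ideal_A_gen) auto
  then show ?thesis
    using True nil by (simp add: A_ideal_Azero)
next
  case False
  then have "t + 1 - (t + 1 - i) = i" "1 \<le> t + 1 - i" "t + 1 - i \<le> t - 1"
    using i by auto
  then have "Ascale (a ^ (t + 1 - i)) (g i) \<in> ?L"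
    by (metis (mono_tags, lifting) UnI2 mem_Collect_eq)
  then show ?thesis
    by (rule subsetD[OF A_gen_superset])
qed

lemma A_ann_subset_dual_generators:
  fixes a :: "'a::comm_ring_1" and t :: nat
  assumes chain: "chain_ring TYPE('a)"
    and maxid: "R_maximal_ideal (R_principal a)"
    and nil: "a ^ t = 0" "\<forall>s<t. a ^ s \<noteq> 0"
    and gC: "\<forall>i\<le>t. g i \<in> C"
    and orth: "\<forall>i\<le>t. \<forall>j\<le>t. i \<noteq> j \<longrightarrow> g i \<otimes> g j = Azero"
    and w: "w \<in> C" "w \<otimes> (\<lambda>y. \<Sum>i\<in>{0..t}. g i y) = Aone"
  shows "Ann (Gen {Ascale (a ^ (j - 1)) (g j) | j. 1 \<le> j \<and> j \<le> t})
    \<subseteq> Gen ({g 0} \<union> {Ascale (a ^ i) (g (t + 1 - i)) | i. 1 \<le> i \<and> i \<le> t - 1})"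
    (is "Ann (Gen ?K) \<subseteq> Gen ?L")
proof
  have L: "A_ideal e r (Gen ?L)"
    using gC by (intro A_ideal_A_gen) auto
  have gen_L: "u \<in> ?L \<Longrightarrow> u \<in> Gen ?L" for u
    using A_gen_superset[of ?L] by (rule subsetD)
  fix x assume "x \<in> Ann (Gen ?K)"
  moreover have "Ann (Gen ?K) = Ann ?K"
    using gC by (intro A_ann_A_gen) auto
  ultimately have "x \<in> Ann ?K"
    by simp
  then have x: "x \<in> C" "\<forall>y\<in>?K. x \<otimes> y = Azero"
    by (simp_all add: A_ann_def)
  have "x \<otimes> w \<otimes> g i \<in> Gen ?L" if i: "i \<le> t" for i
  proof (cases "i = 0")
    case True
    have "g 0 \<in> Gen ?L"
      by (rule gen_L) simp
    then show ?thesis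
      unfolding True by (rule A_ideal_Amul[OF L Amul_in])
  next
    case False
    then have "Ascale (a ^ (i - 1)) (g i) \<in> ?K"
      using i by auto
    then have "Ascale (a ^ (i - 1)) (x \<otimes> g i) = Azero"
      using x(2) by (simp add: Amul_Ascale_right[symmetric])
    moreover have i1: "1 \<le> i"
      using False by simp
    ultimately obtain z where z: "z \<in> C" "x \<otimes> w \<otimes> g i = z \<otimes> Ascale (a ^ (t + 1 - i)) (g i)"
      using i by (elim orthogonal_component_scaled[OF chain maxid nil orth w(2)])
    show ?thesis
      unfolding z(2) using z(1) scaled_generator_in_dual[OF nil(1) gC i1 i]
      by (rule A_ideal_Amul[OF L])
  qed
  then have "(\<lambda>y. \<Sum>i\<in>{0..t}. (x \<otimes> w \<otimes> g i) y) \<in> Gen ?L"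
    by (intro A_ideal_sum[OF L]) auto
  then show "x \<in> Gen ?L"
    using orthogonal_decomposition[OF w(2) x(1)] by simp
qed

lemma A_perp_scaled_generators:
  fixes a :: "'a::{comm_ring_1,finite}" and t :: nat
  assumes chain: "chain_ring TYPE('a)"
    and maxid: "R_maximal_ideal (R_principal a)"
    and nil: "a ^ t = 0" "\<forall>s<t. a ^ s \<noteq> 0"
    and gC: "\<forall>i\<le>t. g i \<in> C"
    and ann_int: "(\<Inter>i\<in>{0..t}. Ann (Gen {g i})) = {Azero}"
    and ann_comax: "\<forall>i j. i < j \<and> j \<le> t \<longrightarrow> A_sum (Ann (Gen {g i})) (Ann (Gen {g j})) = C"
  shows "A_perp e r (Gen {Ascale (a ^ (j - 1)) (g j) | j. 1 \<le> j \<and> j \<le> t})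
    = Gen (Atau ` ({g 0} \<union> {Ascale (a ^ i) (g (t + 1 - i)) | i. 1 \<le> i \<and> i \<le> t - 1}))"
    (is "A_perp e r (Gen ?K) = Gen (Atau ` ?L)")
proof -
  have orth: "\<forall>i\<le>t. \<forall>j\<le>t. i \<noteq> j \<longrightarrow> g i \<otimes> g j = Azero"
    using gC ann_comax by (rule pairwise_orthogonal_if_comaximal)
  obtain w where w: "w \<in> C" "w \<otimes> (\<lambda>y. \<Sum>i\<in>{0..t}. g i y) = Aone"
    using orthogonal_sum_cancellable[OF gC orth ann_int] by (rule exists_inverse_if_cancellable)
  have "A_perp e r (Gen ?K) = Atau ` Ann (Gen ?K)"
    using gC by (intro A_perp_eq_Atau_image_A_ann A_ideal_A_gen) auto
  also have "Ann (Gen ?K) = Gen ?L"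
    using A_ann_subset_dual_generators[OF chain maxid nil gC orth w]
      dual_generators_annihilate[OF nil(1) gC orth] by (rule subset_antisym)
  also have "Atau ` Gen ?L = Gen (Atau ` ?L)"
    using gC by (intro A_gen_Atau_image[symmetric]) auto
  finally show ?thesis .
qed

lemma A_ann_Inter_Atau:
  assumes "\<forall>i\<in>I. g i \<in> C" "i0 \<in> I" "(\<Inter>i\<in>I. Ann (Gen {g i})) = {Azero}"
  shows "(\<Inter>i\<in>I. Ann (Gen {Atau (g i)})) = {Azero}"
proof -
  have "(\<Inter>i\<in>I. Ann (Gen {Atau (g i)})) = (\<Inter>i\<in>I. Atau ` Ann (Gen {g i}))"
    using assms(1) by (simp add: A_ann_A_gen_single_Atau)
  also have "\<dots> = Atau ` (\<Inter>i\<in>I. Ann (Gen {g i}))"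
    using assms(1,2) by (intro image_INT[OF inj_on_Atau, symmetric]) (auto simp: A_ann_def)
  finally show ?thesis
    using assms(3) by simp
qed

lemma A_sum_A_ann_Atau:
  assumes "x \<in> C" "y \<in> C" "A_sum (Ann (Gen {x})) (Ann (Gen {y})) = C"
  shows "A_sum (Ann (Gen {Atau x})) (Ann (Gen {Atau y})) = C"
proof -
  have "A_sum (Ann (Gen {Atau x})) (Ann (Gen {Atau y})) = Atau ` A_sum (Ann (Gen {x})) (Ann (Gen {y}))"
    using assms(1,2) by (simp add: A_ann_A_gen_single_Atau Atau_image_A_sum)
  then show ?thesis
    using assms(3) by (simp add: Atau_image_Acar)
qed

end

theorem mainTheorem9:
  fixes a :: "'a::{comm_ring_1, finite}"
    and t p r :: nat and e :: "nat \<Rightarrow> nat"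
    and G :: "nat \<Rightarrow> ((nat \<Rightarrow> nat) \<Rightarrow> 'a)"
    and K :: "((nat \<Rightarrow> nat) \<Rightarrow> 'a) set"
  assumes chain: "chain_ring TYPE('a)"
    and maxid: "R_maximal_ideal (R_principal a)"
    and nil: "a ^ t = 0" "\<forall>s<t. a ^ s \<noteq> 0"
    and charp: "prime p" "of_nat p \<in> R_principal a"
    and e_pos: "\<forall>k<r. 0 < e k"
    and e_coprime: "\<forall>k<r. \<not> p dvd e k"
    and polys: "\<forall>i\<le>t. is_poly r (G i)"
    and Kideal: "A_ideal e r K"
    and ann_int: "(\<Inter>i\<in>{0..t}. A_ann e r (A_gen e r {red e r (G i)})) = {Azero}"
    and ann_comax: "\<forall>i j. i < j \<and> j \<le> t \<longrightarrow>
        A_sum (A_ann e r (A_gen e r {red e r (G i)})) (A_ann e r (A_gen e r {red e r (G j)})) = Acar e r"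
    and Kdef: "K = A_gen e r {red e r (psmult (a ^ (j - 1)) (G j)) | j. 1 \<le> j \<and> j \<le> t}"
  shows "A_perp e r K = A_gen e r ({red e r (tau_poly e (G 0))} \<union>
             {red e r (psmult (a ^ j) (tau_poly e (G (t + 1 - j)))) | j. 1 \<le> j \<and> j \<le> t - 1})
    \<and> (\<Inter>i\<in>{0..t}. A_ann e r (A_gen e r {red e r (tau_poly e (G i))})) = {Azero}
    \<and> (\<forall>i j. i < j \<and> j \<le> t \<longrightarrow>
        A_sum (A_ann e r (A_gen e r {red e r (tau_poly e (G i))}))
              (A_ann e r (A_gen e r {red e r (tau_poly e (G j))})) = Acar e r)"
proof -
  interpret cyclic_group_algebra e r
    using e_pos by unfold_locales
  have gC: "\<forall>i\<le>t. red e r (G i) \<in> Acar e r"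
    by simp
  have red_tau: "red e r (tau_poly e (G i)) = Atau (red e r (G i))" if "i \<le> t" for i
    using polys that by (simp add: red_tau_poly)
  have "(\<Inter>i\<in>{0..t}. Ann (Gen {Atau (red e r (G i))})) = {Azero}"
    using ann_int by (intro A_ann_Inter_Atau[of _ _ 0]) simp_all
  moreover have "A_sum (Ann (Gen {Atau (red e r (G i))})) (Ann (Gen {Atau (red e r (G j))})) = Acar e r"
    if "i < j" "j \<le> t" for i j
    using that ann_comax by (intro A_sum_A_ann_Atau) simp_all
  ultimately show ?thesis
    using A_perp_scaled_generators[OF chain maxid nil gC ann_int ann_comax] red_scaled_generators[OF polys]
    by (simp add: Kdef red_tau)
qed

end
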